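(* Let $X$ be a real Hilbert space, let $f\colon X\to\,]-\infty,+\infty]$ be proper and lower semicontinuous such that there exist $\nu\in\mathbb R$, $\beta\in\mathbb R$, $\alpha\ge 0$ with $f(x)\ge -\alpha\|x\|^2-\beta\|x\|+\nu$ for all $x\in X$. Let $\lambda>0$ and $\mu\in\,]0,\lambda[$. Then the following are equivalent: (i) $f$ is $\tfrac1\lambda$-hypoconvex; (ii) $\mathrm{Id}-\operatorname{Prox}_{\mu f}$ is $\tfrac{\lambda}{2(\lambda-\mu)}$-conically nonexpansive; (iii) $\operatorname{Prox}_{\mu f}$ is $\tfrac{\lambda-\mu}{\lambda}$-cocoercive.
   Context: $\operatorname{Prox}_{\mu f}(x)=\operatorname{argmin}_{y\in X}\big(f(y)+\tfrac{1}{2\mu}\|x-y\|^2\big)$. $f$ is $\tfrac1\lambda$-hypoconvex if $f((1-\tau)x+\tau y)\le(1-\tau)f(x)+\tau f(y)+\tfrac{1}{2\lambda}\tau(1-\tau)\|x-y\|^2$ for all $x,y\in X$, $\tau\in]0,1[$. For $\gamma>0$, an operator $T\colon X\to X$ is $\gamma$-cocoercive if $\langle x-y,Tx-Ty\rangle\ge\gamma\|Tx-Ty\|^2$ for all $x,y$; for $\alpha>0$, $T$ is $\alpha$-conically nonexpansive if $T=(1-\alpha)\mathrm{Id}+\alpha N$ for some nonexpansive ($1$-Lipschitz) $N\colon X\to X$. *)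

theory Defs
  imports "HOL-Analysis.Analysis" "HOL-Library.Extended_Real"
begin

text \<open>Functions X \<rightarrow> ]-\<infinity>,+\<infinity>] are modelled as maps into ereal that never take the value -\<infinity>.\<close>

definition proper_fun :: "('a \<Rightarrow> ereal) \<Rightarrow> bool" where
  "proper_fun f \<longleftrightarrow> (\<forall>x. f x \<noteq> -\<infinity>) \<and> (\<exists>x. f x \<noteq> \<infinity>)"

definition lsc :: "('a::topological_space \<Rightarrow> ereal) \<Rightarrow> bool" where
  "lsc f \<longleftrightarrow> (\<forall>x. f x \<le> Liminf (at x) f)"

definition Prox :: "real \<Rightarrow> ('a::real_normed_vector \<Rightarrow> ereal) \<Rightarrow> 'a \<Rightarrow> 'a set" where
  "Prox \<mu> f x = {y. \<forall>z. f y + ereal ((norm (x - y))\<^sup>2 / (2 * \<mu>))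
                        \<le> f z + ereal ((norm (x - z))\<^sup>2 / (2 * \<mu>))}"

definition hypoconvex :: "real \<Rightarrow> ('a::real_normed_vector \<Rightarrow> ereal) \<Rightarrow> bool" where
  "hypoconvex \<rho> f \<longleftrightarrow> (\<forall>x y \<tau>. 0 < \<tau> \<and> \<tau> < 1 \<longrightarrow>
     f ((1 - \<tau>) *\<^sub>R x + \<tau> *\<^sub>R y)
       \<le> ereal (1 - \<tau>) * f x + ereal \<tau> * f y + ereal (\<rho> / 2 * \<tau> * (1 - \<tau>) * (norm (x - y))\<^sup>2))"

definition cocoercive :: "real \<Rightarrow> ('a::real_inner \<Rightarrow> 'a) \<Rightarrow> bool" where
  "cocoercive \<gamma> T \<longleftrightarrow> (\<forall>x y. inner (x - y) (T x - T y) \<ge> \<gamma> * (norm (T x - T y))\<^sup>2)"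

definition nonexpansive :: "('a::real_normed_vector \<Rightarrow> 'a) \<Rightarrow> bool" where
  "nonexpansive N \<longleftrightarrow> (\<forall>x y. norm (N x - N y) \<le> norm (x - y))"

definition conically_nonexpansive :: "real \<Rightarrow> ('a::real_normed_vector \<Rightarrow> 'a) \<Rightarrow> bool" where
  "conically_nonexpansive \<alpha> T \<longleftrightarrow>
     (\<exists>N. nonexpansive N \<and> (\<forall>x. T x = (1 - \<alpha>) *\<^sub>R x + \<alpha> *\<^sub>R N x))"

end

theory Submission
  imports Defs
begin

(*
  Write hypoconvex (- \<sigma>) for \<sigma>-strong convexity. If f is 1/\<lambda>-hypoconvex, the prox objective
  f + |x - .|^2/(2\<mu>) is (1/\<mu> - 1/\<lambda>)-strongly convex; being lower semicontinuous and bounded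
  below (thanks to the quadratic minorant of f), it has a unique minimiser with quadratic growth, and
  adding the growth inequalities at Prox x and Prox y gives cocoercivity with constant
  \<mu> (1/\<mu> - 1/\<lambda>) = (\<lambda> - \<mu>)/\<lambda>.

  Conversely, Prox x minimises h - <x/\<mu>, .> for h = f + |.|^2/(2\<mu>), i.e. x/\<mu> is a subgradient
  of h at Prox x. A cocoercive selection of subgradients upgrades them to strong subgradients (a
  descent lemma for the conjugate of h), and since Id + k T is onto for monotone Lipschitz T, every
  point is a limit of points of the range of the selection; lower semicontinuity then makes h
  strongly convex, which says exactly that f is 1/\<lambda>-hypoconvex.

  Conic nonexpansiveness of Id - T and cocoercivity of T are equivalent by expanding a norm.
*)

lemma norm_diff_squared:
  fixes u v :: "'a::real_inner"
  shows "(norm (u - v))\<^sup>2 = (norm u)\<^sup>2 - 2 * inner u v + (norm v)\<^sup>2"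
  by (simp add: power2_norm_eq_inner inner_diff_left inner_diff_right inner_commute)

lemma norm_convex_comb_squared:
  fixes u v :: "'a::real_inner"
  shows "(norm ((1 - t) *\<^sub>R u + t *\<^sub>R v))\<^sup>2
    = (1 - t) * (norm u)\<^sup>2 + t * (norm v)\<^sup>2 - t * (1 - t) * (norm (u - v))\<^sup>2"
  by (simp add: power2_norm_eq_inner inner_commute algebra_simps)

lemma dist_convex_comb_squared:
  fixes x a b :: "'a::real_inner"
  shows "(norm (x - ((1 - t) *\<^sub>R a + t *\<^sub>R b)))\<^sup>2
    = (1 - t) * (norm (x - a))\<^sup>2 + t * (norm (x - b))\<^sup>2 - t * (1 - t) * (norm (a - b))\<^sup>2"
proof -
  have "x - ((1 - t) *\<^sub>R a + t *\<^sub>R b) = (1 - t) *\<^sub>R (x - a) + t *\<^sub>R (x - b)"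
    by (simp add: algebra_simps)
  then show ?thesis
    using norm_convex_comb_squared[of t "x - a" "x - b"] by (simp add: norm_minus_commute)
qed

lemma lsc_sequentially:
  fixes f :: "'a::metric_space \<Rightarrow> ereal"
  assumes "lsc f" "y \<longlonglongrightarrow> p" "\<And>n. f (y n) \<le> ereal (b n)" "b \<longlonglongrightarrow> L"
  shows "f p \<le> ereal L"
proof (rule ccontr)
  assume "\<not> f p \<le> ereal L"
  then have "ereal L < f p"
    by simp
  from ereal_dense2[OF this] obtain c where c: "ereal L < ereal c" "ereal c < f p"
    by blast
  then have "ereal c < Liminf (at p) f"
    using assms(1) unfolding lsc_def by (meson less_le_trans)
  then have "eventually (\<lambda>x. ereal c < f x) (at p)"
    by (rule less_LiminfD)
  then have "eventually (\<lambda>x. ereal c < f x) (nhds p)"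
    using c(2) unfolding eventually_at_filter by (auto elim: eventually_mono)
  then have "eventually (\<lambda>n. ereal c < f (y n)) sequentially"
    using assms(2) by (rule eventually_compose_filterlim)
  moreover have "eventually (\<lambda>n. b n < c) sequentially"
    using assms(4) c(1) by (simp add: order_tendstoD)
  ultimately have "eventually (\<lambda>n. False) sequentially"
  proof eventually_elim
    case (elim n)
    then have "ereal c < ereal (b n)"
      using assms(3)[of n] by order
    then show False
      using elim by simp
  qed
  then show False by simp
qed

lemma lsc_add_continuous:
  fixes f :: "'a::topological_space \<Rightarrow> ereal"
  assumes "lsc f" "continuous_on UNIV q"
  shows "lsc (\<lambda>y. f y + ereal (q y))"
  unfolding lsc_def le_Liminf_iff
proof (intro allI impI)
  fix x and c :: ereal
  assume "c < f x + ereal (q x)"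
  from ereal_dense2[OF this] obtain s where s: "c < ereal s" "ereal s < f x + ereal (q x)"
    by blast
  from ereal_dense2[OF s(1)] obtain r where r: "c < ereal r" "r < s"
    by auto
  from s(2) have "ereal (s - q x) < f x"
    by (cases "f x") auto
  then have "ereal (s - q x) < Liminf (at x) f"
    using assms(1) unfolding lsc_def by (meson less_le_trans)
  then have "eventually (\<lambda>y. ereal (s - q x) < f y) (at x)"
    by (rule less_LiminfD)
  moreover have "(q \<longlongrightarrow> q x) (at x)"
    using assms(2) by (simp add: continuous_on_def)
  then have "eventually (\<lambda>y. q x - (s - r) < q y) (at x)"
    using r(2) by (simp add: order_tendstoD)
  ultimately show "eventually (\<lambda>y. c < f y + ereal (q y)) (at x)"
  proof eventually_elim
    case (elim y)
    then have "ereal r < f y + ereal (q y)"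
      by (cases "f y") auto
    then show ?case
      using r(1) by order
  qed
qed

lemma proper_fun_add_real:
  assumes "proper_fun f"
  shows "proper_fun (\<lambda>z. f z + ereal (q z))"
  using assms unfolding proper_fun_def
  by (metis ereal_plus_eq_MInfty ereal_plus_eq_PInfty MInfty_neq_ereal(1) PInfty_neq_ereal(1))

lemma hypoconvexD_finite:
  assumes "hypoconvex \<rho> g" "g a = ereal ga" "g b = ereal gb" "0 < t" "t < 1"
  shows "g ((1 - t) *\<^sub>R a + t *\<^sub>R b)
    \<le> ereal ((1 - t) * ga + t * gb + \<rho> / 2 * t * (1 - t) * (norm (a - b))\<^sup>2)"
  using assms unfolding hypoconvex_def by (metis plus_ereal.simps(1) times_ereal.simps(1))

lemma hypoconvexI_finite:
  assumes "\<And>y. g y \<noteq> -\<infinity>"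
    and "\<And>a b ga gb t. g a = ereal ga \<Longrightarrow> g b = ereal gb \<Longrightarrow> 0 < t \<Longrightarrow> t < 1 \<Longrightarrow>
      g ((1 - t) *\<^sub>R a + t *\<^sub>R b)
        \<le> ereal ((1 - t) * ga + t * gb + \<rho> / 2 * t * (1 - t) * (norm (a - b))\<^sup>2)"
  shows "hypoconvex \<rho> g"
  unfolding hypoconvex_def
proof (intro allI impI)
  fix a b and t :: real
  assume t: "0 < t \<and> t < 1"
  show "g ((1 - t) *\<^sub>R a + t *\<^sub>R b)
    \<le> ereal (1 - t) * g a + ereal t * g b + ereal (\<rho> / 2 * t * (1 - t) * (norm (a - b))\<^sup>2)"
  proof (cases "g a = \<infinity> \<or> g b = \<infinity>")
    case True
    have infinite: "ereal (1 - t) * g a + ereal t * g b = \<infinity>"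
      using True t assms(1)[of a] assms(1)[of b] by (cases "g a"; cases "g b") auto
    show ?thesis
      unfolding infinite by simp
  next
    case False
    then obtain ga gb where "g a = ereal ga" "g b = ereal gb"
      using assms(1) by (meson ereal_cases)
    then show ?thesis
      using assms(2) t by simp
  qed
qed

lemma hypoconvex_add_sq_dist:
  fixes f :: "'a::real_inner \<Rightarrow> ereal"
  assumes "hypoconvex \<rho> f" "\<And>y. f y \<noteq> -\<infinity>"
  shows "hypoconvex (\<rho> - 1 / \<mu>) (\<lambda>y. f y + ereal ((norm (x - y))\<^sup>2 / (2 * \<mu>)))"
proof (rule hypoconvexI_finite)
  fix y
  show "f y + ereal ((norm (x - y))\<^sup>2 / (2 * \<mu>)) \<noteq> -\<infinity>"
    using assms(2)[of y] by (cases "f y") auto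
next
  fix a b ga gb and t :: real
  assume g: "f a + ereal ((norm (x - a))\<^sup>2 / (2 * \<mu>)) = ereal ga"
    "f b + ereal ((norm (x - b))\<^sup>2 / (2 * \<mu>)) = ereal gb" and t: "0 < t" "t < 1"
  let ?u = "(1 - t) *\<^sub>R a + t *\<^sub>R b"
  have "f a = ereal (ga - (norm (x - a))\<^sup>2 / (2 * \<mu>))" "f b = ereal (gb - (norm (x - b))\<^sup>2 / (2 * \<mu>))"
    using g by (cases "f a"; cases "f b"; auto)+
  then have "f ?u \<le> ereal ((1 - t) * (ga - (norm (x - a))\<^sup>2 / (2 * \<mu>)) + t * (gb - (norm (x - b))\<^sup>2 / (2 * \<mu>))
      + \<rho> / 2 * t * (1 - t) * (norm (a - b))\<^sup>2)"
    using hypoconvexD_finite[OF assms(1) _ _ t] by blast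
  moreover have "(1 - t) * (ga - (norm (x - a))\<^sup>2 / (2 * \<mu>)) + t * (gb - (norm (x - b))\<^sup>2 / (2 * \<mu>))
      + \<rho> / 2 * t * (1 - t) * (norm (a - b))\<^sup>2 + (norm (x - ?u))\<^sup>2 / (2 * \<mu>)
    = (1 - t) * ga + t * gb + (\<rho> - 1 / \<mu>) / 2 * t * (1 - t) * (norm (a - b))\<^sup>2"
    unfolding dist_convex_comb_squared by (cases "\<mu> = 0") (simp_all add: field_simps)
  ultimately show "f ?u + ereal ((norm (x - ?u))\<^sup>2 / (2 * \<mu>))
    \<le> ereal ((1 - t) * ga + t * gb + (\<rho> - 1 / \<mu>) / 2 * t * (1 - t) * (norm (a - b))\<^sup>2)"
    by (metis add_right_mono plus_ereal.simps(1))
qed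

section \<open>Strong subgradients\<close>

text \<open>With \<sigma> = 0 this says x \<in> \<partial>h(v); with x = 0 it is quadratic growth of h away from v.\<close>

definition strong_subgradient :: "real \<Rightarrow> ('a::real_inner \<Rightarrow> ereal) \<Rightarrow> 'a \<Rightarrow> 'a \<Rightarrow> bool" where
  "strong_subgradient \<sigma> h v x \<longleftrightarrow>
     (\<forall>z. h v + ereal (inner x (z - v) + \<sigma> / 2 * (norm (z - v))\<^sup>2) \<le> h z)"

lemma strong_subgradient_finite:
  assumes "proper_fun h" "strong_subgradient \<sigma> h v x"
  obtains r where "h v = ereal r"
proof -
  obtain z where "h z \<noteq> \<infinity>" "h v \<noteq> -\<infinity>"
    using assms(1) unfolding proper_fun_def by blast
  moreover have "h v + ereal (inner x (z - v) + \<sigma> / 2 * (norm (z - v))\<^sup>2) \<le> h z"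
    using assms(2) unfolding strong_subgradient_def by blast
  ultimately show thesis
    using that by (cases "h v"; cases "h z") auto
qed

lemma strong_subgradientD_finite:
  assumes "strong_subgradient \<sigma> h v x" "h v = ereal hv" "h z = ereal hz"
  shows "hv + inner x (z - v) + \<sigma> / 2 * (norm (z - v))\<^sup>2 \<le> hz"
  using assms unfolding strong_subgradient_def by (metis ereal_less_eq(3) plus_ereal.simps(1) add.assoc)

lemma cocoercive_if_strong_subgradients:
  assumes "proper_fun h" "\<And>x. strong_subgradient \<sigma> h (S x) x"
  shows "cocoercive \<sigma> S"
  unfolding cocoercive_def
proof (intro allI)
  fix x y
  obtain hx hy where h: "h (S x) = ereal hx" "h (S y) = ereal hy"
    using strong_subgradient_finite[OF assms(1) assms(2)] by metis
  have "hx + inner x (S y - S x) + \<sigma> / 2 * (norm (S y - S x))\<^sup>2 \<le> hy"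
    "hy + inner y (S x - S y) + \<sigma> / 2 * (norm (S x - S y))\<^sup>2 \<le> hx"
    using strong_subgradientD_finite[OF assms(2) h(1,2)] strong_subgradientD_finite[OF assms(2) h(2,1)]
    by auto
  moreover have "inner x (S y - S x) + inner y (S x - S y) = - inner (x - y) (S x - S y)"
    by (simp add: inner_diff_left inner_diff_right)
  ultimately show "\<sigma> * (norm (S x - S y))\<^sup>2 \<le> inner (x - y) (S x - S y)"
    by (simp add: norm_minus_commute)
qed

lemma cocoercive_rescale:
  assumes "cocoercive \<gamma> T" "0 < c"
  shows "cocoercive (\<gamma> / c) (\<lambda>y. T (c *\<^sub>R y))"
  unfolding cocoercive_def
proof (intro allI)
  fix x y
  have "\<gamma> * (norm (T (c *\<^sub>R x) - T (c *\<^sub>R y)))\<^sup>2 \<le> c * inner (x - y) (T (c *\<^sub>R x) - T (c *\<^sub>R y))"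
    using assms(1) unfolding cocoercive_def by (metis inner_scaleR_left scaleR_diff_right)
  then show "\<gamma> / c * (norm (T (c *\<^sub>R x) - T (c *\<^sub>R y)))\<^sup>2 \<le> inner (x - y) (T (c *\<^sub>R x) - T (c *\<^sub>R y))"
    using assms(2) by (simp add: field_simps)
qed

lemma strong_subgradient_prox_objective_iff:
  fixes f :: "'a::real_inner \<Rightarrow> ereal"
  assumes "0 < \<mu>"
  shows "strong_subgradient \<sigma> (\<lambda>z. f z + ereal ((norm (x - z))\<^sup>2 / (2 * \<mu>))) p 0
    \<longleftrightarrow> strong_subgradient \<sigma> (\<lambda>z. f z + ereal ((norm z)\<^sup>2 / (2 * \<mu>))) p ((1 / \<mu>) *\<^sub>R x)"
proof -
  have shift: "(norm (x - p))\<^sup>2 / (2 * \<mu>) - (norm (x - z))\<^sup>2 / (2 * \<mu>)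
      = (norm p)\<^sup>2 / (2 * \<mu>) - (norm z)\<^sup>2 / (2 * \<mu>) + inner ((1 / \<mu>) *\<^sub>R x) (z - p)" for z
    using assms by (simp add: power2_norm_eq_inner inner_diff_left inner_diff_right inner_commute field_simps)
  show ?thesis
    unfolding strong_subgradient_def
  proof (rule all_cong1)
    fix z
    show "f p + ereal ((norm (x - p))\<^sup>2 / (2 * \<mu>)) + ereal (inner 0 (z - p) + \<sigma> / 2 * (norm (z - p))\<^sup>2)
        \<le> f z + ereal ((norm (x - z))\<^sup>2 / (2 * \<mu>))
      \<longleftrightarrow> f p + ereal ((norm p)\<^sup>2 / (2 * \<mu>)) + ereal (inner ((1 / \<mu>) *\<^sub>R x) (z - p) + \<sigma> / 2 * (norm (z - p))\<^sup>2)
        \<le> f z + ereal ((norm z)\<^sup>2 / (2 * \<mu>))"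
      using shift[of z] by (cases "f p"; cases "f z") (auto simp: algebra_simps)
  qed
qed

lemma Prox_iff_subgradient:
  fixes f :: "'a::real_inner \<Rightarrow> ereal"
  assumes "0 < \<mu>"
  shows "p \<in> Prox \<mu> f x
    \<longleftrightarrow> strong_subgradient 0 (\<lambda>z. f z + ereal ((norm z)\<^sup>2 / (2 * \<mu>))) p ((1 / \<mu>) *\<^sub>R x)"
  unfolding strong_subgradient_prox_objective_iff[OF assms, symmetric]
  by (simp add: Prox_def strong_subgradient_def)

section \<open>Minimisers of strongly convex functions\<close>

lemma quadratic_minorant_on_segment:
  fixes y z :: "'a::real_normed_vector"
  assumes "0 \<le> \<alpha>" "0 \<le> t"
  shows "\<nu> - 2 * \<alpha> * (norm z)\<^sup>2 - \<bar>\<beta>\<bar> * norm z - 2 * \<alpha> * t\<^sup>2 * (norm (z - y))\<^sup>2 - \<bar>\<beta>\<bar> * t * norm (z - y)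
    \<le> - \<alpha> * (norm ((1 - t) *\<^sub>R z + t *\<^sub>R y))\<^sup>2 - \<beta> * norm ((1 - t) *\<^sub>R z + t *\<^sub>R y) + \<nu>"
proof -
  define w d where "w = (1 - t) *\<^sub>R z + t *\<^sub>R y" and "d = norm (z - y)"
  have "w = z + t *\<^sub>R (y - z)"
    unfolding w_def by (simp add: algebra_simps)
  then have nw: "norm w \<le> norm z + t * d"
    using assms(2) norm_triangle_ineq[of z "t *\<^sub>R (y - z)"] by (simp add: d_def norm_minus_commute)
  have "(norm w)\<^sup>2 \<le> (norm z + t * d)\<^sup>2"
    using nw by (simp add: power_mono)
  also have "\<dots> \<le> 2 * (norm z)\<^sup>2 + 2 * t\<^sup>2 * d\<^sup>2"
    using sum_squares_bound[of "norm z" "t * d"] by (simp add: power2_eq_square algebra_simps)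
  finally have "\<alpha> * (norm w)\<^sup>2 \<le> \<alpha> * (2 * (norm z)\<^sup>2 + 2 * t\<^sup>2 * d\<^sup>2)"
    using assms(1) by (rule mult_left_mono)
  moreover have "\<beta> * norm w \<le> \<bar>\<beta>\<bar> * (norm z + t * d)"
    using nw by (meson abs_ge_self abs_ge_zero mult_mono norm_ge_zero order_trans)
  ultimately show ?thesis
    unfolding w_def[symmetric] d_def[symmetric] by (simp add: algebra_simps)
qed

lemma strongly_convex_bdd_below_arith:
  fixes \<sigma> \<alpha> \<beta> t d :: real
  assumes "0 < \<sigma>" "t \<le> 1 / 2" "16 * \<alpha> * t \<le> \<sigma>"
  shows "- (2 * \<beta>\<^sup>2 / \<sigma>) \<le> \<sigma> / 2 * (1 - t) * d\<^sup>2 - 2 * \<alpha> * t * d\<^sup>2 - \<bar>\<beta>\<bar> * d"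
proof -
  have "\<sigma> * t \<le> \<sigma> * (1 / 2)"
    using assms(1,2) by (intro mult_left_mono) auto
  then have "\<sigma> / 8 \<le> \<sigma> / 2 * (1 - t) - 2 * \<alpha> * t"
    using assms(3) by (simp add: algebra_simps)
  then have "\<sigma> / 8 * d\<^sup>2 \<le> (\<sigma> / 2 * (1 - t) - 2 * \<alpha> * t) * d\<^sup>2"
    by (rule mult_right_mono) simp
  moreover have "0 \<le> \<sigma> / 8 * (d - 4 * \<bar>\<beta>\<bar> / \<sigma>)\<^sup>2"
    using assms(1) by simp
  moreover have "\<sigma> / 8 * (d - 4 * \<bar>\<beta>\<bar> / \<sigma>)\<^sup>2 = \<sigma> / 8 * d\<^sup>2 - \<bar>\<beta>\<bar> * d + 2 * \<beta>\<^sup>2 / \<sigma>"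
    using assms(1) by (simp add: power2_eq_square field_simps)
  ultimately show ?thesis
    by (simp add: algebra_simps)
qed

lemma strongly_convex_bdd_below:
  fixes g :: "'a::real_inner \<Rightarrow> ereal"
  assumes "hypoconvex (- \<sigma>) g" "0 < \<sigma>" "proper_fun g" "0 \<le> \<alpha>"
    and "\<And>y. ereal (- \<alpha> * (norm y)\<^sup>2 - \<beta> * norm y + \<nu>) \<le> g y"
  shows "\<exists>M. \<forall>y. ereal M \<le> g y"
proof -
  obtain z g0 where z: "g z = ereal g0"
    using assms(3) unfolding proper_fun_def by (metis ereal_cases)
  \<comment> \<open>Compare g y with g at (1 - t) z + t y: for small t the gain (\<sigma>/2) t (1 - t) d^2 from
    strong convexity beats the loss 2 \<alpha> t^2 d^2 allowed by the quadratic minorant.\<close>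
  define t where "t = min (1 / 2) (\<sigma> / (16 * \<alpha> + 1))"
  have "t \<le> 1 / 2"
    unfolding t_def by (rule min.cobounded1)
  moreover have "0 < t"
    using assms(2,4) by (simp add: t_def)
  ultimately have t: "0 < t" "t \<le> 1 / 2" "t < 1"
    by auto
  have "16 * \<alpha> * t \<le> 16 * \<alpha> * (\<sigma> / (16 * \<alpha> + 1))"
    using assms(4) unfolding t_def by (intro mult_left_mono) auto
  also have "\<dots> \<le> \<sigma>"
    using assms(2,4) by (simp add: field_simps)
  finally have t\<sigma>: "16 * \<alpha> * t \<le> \<sigma>" .
  define K where "K = \<nu> - 2 * \<alpha> * (norm z)\<^sup>2 - \<bar>\<beta>\<bar> * norm z - (1 - t) * g0"
  have "ereal (K / t - 2 * \<beta>\<^sup>2 / \<sigma>) \<le> g y" for y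
  proof (cases "g y")
    case (real gy)
    define d where "d = norm (z - y)"
    have "ereal (- \<alpha> * (norm ((1 - t) *\<^sub>R z + t *\<^sub>R y))\<^sup>2 - \<beta> * norm ((1 - t) *\<^sub>R z + t *\<^sub>R y) + \<nu>)
        \<le> g ((1 - t) *\<^sub>R z + t *\<^sub>R y)"
      by (rule assms(5))
    also have "\<dots> \<le> ereal ((1 - t) * g0 + t * gy + (- \<sigma>) / 2 * t * (1 - t) * d\<^sup>2)"
      unfolding d_def by (rule hypoconvexD_finite[OF assms(1) z real t(1,3)])
    finally have "K + t * (\<sigma> / 2 * (1 - t) * d\<^sup>2 - 2 * \<alpha> * t * d\<^sup>2 - \<bar>\<beta>\<bar> * d) \<le> t * gy"
      using quadratic_minorant_on_segment[OF assms(4), of t \<nu> z \<beta> y] t(1)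
      unfolding K_def d_def by (simp add: algebra_simps power2_eq_square)
    moreover have "t * (- (2 * \<beta>\<^sup>2 / \<sigma>)) \<le> t * (\<sigma> / 2 * (1 - t) * d\<^sup>2 - 2 * \<alpha> * t * d\<^sup>2 - \<bar>\<beta>\<bar> * d)"
      using mult_left_mono[OF strongly_convex_bdd_below_arith[OF assms(2) t(2) t\<sigma>], of t] t(1) by simp
    ultimately have "K - t * (2 * \<beta>\<^sup>2 / \<sigma>) \<le> t * gy"
      by simp
    then show ?thesis
      using real t(1) by (simp add: field_simps)
  qed (use assms(3) in \<open>auto simp: proper_fun_def\<close>)
  then show ?thesis
    by blast
qed

lemma strongly_convex_minimizer_growth:
  fixes g :: "'a::real_inner \<Rightarrow> ereal"
  assumes "hypoconvex (- \<sigma>) g" "proper_fun g" "\<And>z. g p \<le> g z"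
  shows "strong_subgradient \<sigma> g p 0"
  unfolding strong_subgradient_def
proof
  fix z
  obtain z0 where "g z0 \<noteq> \<infinity>" "g p \<noteq> -\<infinity>"
    using assms(2) unfolding proper_fun_def by blast
  then obtain gp where gp: "g p = ereal gp"
    using assms(3)[of z0] by (cases "g p") auto
  show "g p + ereal (inner 0 (z - p) + \<sigma> / 2 * (norm (z - p))\<^sup>2) \<le> g z"
  proof (cases "g z")
    case (real gz)
    have bound: "gp + \<sigma> / 2 * (1 - t) * (norm (z - p))\<^sup>2 \<le> gz" if t: "0 < t" "t < 1" for t
    proof -
      have "ereal gp \<le> g ((1 - t) *\<^sub>R p + t *\<^sub>R z)"
        using assms(3) gp by metis
      also have "\<dots> \<le> ereal ((1 - t) * gp + t * gz + (- \<sigma>) / 2 * t * (1 - t) * (norm (p - z))\<^sup>2)"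
        by (rule hypoconvexD_finite[OF assms(1) gp real t])
      finally have "t * (gp + \<sigma> / 2 * (1 - t) * (norm (z - p))\<^sup>2) \<le> t * gz"
        by (simp add: algebra_simps norm_minus_commute)
      then show ?thesis
        using t(1) by simp
    qed
    have "((\<lambda>t. gp + \<sigma> / 2 * (1 - t) * (norm (z - p))\<^sup>2) \<longlongrightarrow> gp + \<sigma> / 2 * (1 - 0) * (norm (z - p))\<^sup>2) (at_right 0)"
      by (intro tendsto_intros)
    moreover have "eventually (\<lambda>t. gp + \<sigma> / 2 * (1 - t) * (norm (z - p))\<^sup>2 \<le> gz) (at_right 0)"
      unfolding eventually_at_right_field using bound by (intro exI[of _ 1]) auto
    ultimately have "gp + \<sigma> / 2 * (norm (z - p))\<^sup>2 \<le> gz"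
      by (simp add: tendsto_upperbound)
    then show ?thesis
      using gp real by simp
  qed (use assms(2) in \<open>auto simp: proper_fun_def\<close>)
qed

lemma strong_subgradient_minimizer_unique:
  assumes "strong_subgradient \<sigma> g p 0" "0 < \<sigma>" "proper_fun g" "\<And>z. g q \<le> g z"
  shows "q = p"
proof -
  obtain gp where gp: "g p = ereal gp"
    using strong_subgradient_finite[OF assms(3,1)] by blast
  then obtain gq where gq: "g q = ereal gq" "gq \<le> gp"
    using assms(3) assms(4)[of p] unfolding proper_fun_def by (cases "g q") auto
  have "gp + \<sigma> / 2 * (norm (q - p))\<^sup>2 \<le> gq"
    using strong_subgradientD_finite[OF assms(1) gp gq(1)] by simp
  then have "\<sigma> / 2 * (norm (q - p))\<^sup>2 \<le> 0"
    using gq(2) by linarith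
  then show ?thesis
    using assms(2) by (simp add: mult_le_0_iff)
qed

lemma strongly_convex_minimizing_sequence_Cauchy:
  fixes g :: "'a::real_inner \<Rightarrow> ereal"
  assumes "hypoconvex (- \<sigma>) g" "0 < \<sigma>" "\<And>y. ereal m \<le> g y"
    and "\<And>n. g (ys n) \<le> ereal (m + inverse (real (Suc n)))"
  shows "Cauchy ys"
proof (rule metric_CauchyI)
  fix e :: real
  assume e: "0 < e"
  define gs where "gs n = real_of_ereal (g (ys n))" for n
  have gs: "g (ys n) = ereal (gs n)" "gs n \<le> m + inverse (real (Suc n))" for n
    using assms(3)[of "ys n"] assms(4)[of n] by (cases "g (ys n)"; simp add: gs_def)+
  have mid: "\<sigma> / 8 * (norm (ys i - ys j))\<^sup>2 \<le> gs i / 2 + gs j / 2 - m" for i j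
  proof -
    have "ereal m \<le> g ((1 - 1 / 2) *\<^sub>R ys i + (1 / 2) *\<^sub>R ys j)"
      by (rule assms(3))
    also have "\<dots> \<le> ereal ((1 - 1 / 2) * gs i + 1 / 2 * gs j + (- \<sigma>) / 2 * (1 / 2) * (1 - 1 / 2) * (norm (ys i - ys j))\<^sup>2)"
      by (rule hypoconvexD_finite[OF assms(1) gs(1) gs(1)]) auto
    finally have "m \<le> gs i / 2 + gs j / 2 - \<sigma> / 8 * (norm (ys i - ys j))\<^sup>2"
      by simp
    then show ?thesis
      by linarith
  qed
  obtain N where "8 / (\<sigma> * e\<^sup>2) < real N"
    using reals_Archimedean2 by blast
  then have "8 / (\<sigma> * e\<^sup>2) < real (Suc N)"
    by simp
  then have N: "inverse (real (Suc N)) < \<sigma> / 8 * e\<^sup>2"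
    using assms(2) e by (simp add: field_simps)
  have mono: "inverse (real (Suc n)) \<le> inverse (real (Suc N))" if "N \<le> n" for n
    using that by (simp add: le_imp_inverse_le)
  have "\<sigma> / 8 * (norm (ys i - ys j))\<^sup>2 < \<sigma> / 8 * e\<^sup>2" if "N \<le> i" "N \<le> j" for i j
    using mid[of i j] gs(2)[of i] gs(2)[of j] mono[OF that(1)] mono[OF that(2)] N by linarith
  then have "norm (ys i - ys j) < e" if "N \<le> i" "N \<le> j" for i j
    using that assms(2) e power_less_imp_less_base[of "norm (ys i - ys j)" 2 e] by simp
  then show "\<exists>N. \<forall>i\<ge>N. \<forall>j\<ge>N. dist (ys i) (ys j) < e"
    by (auto simp: dist_norm)
qed

lemma strongly_convex_has_minimizer:
  fixes g :: "'a::{real_inner, complete_space} \<Rightarrow> ereal"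
  assumes "hypoconvex (- \<sigma>) g" "0 < \<sigma>" "proper_fun g" "lsc g" "\<And>y. ereal M \<le> g y"
  shows "\<exists>p. \<forall>z. g p \<le> g z"
proof -
  obtain z0 where "g z0 \<noteq> \<infinity>"
    using assms(3) unfolding proper_fun_def by blast
  moreover have "ereal M \<le> (INF y. g y)"
    using assms(5) by (rule INF_greatest)
  moreover have "(INF y. g y) \<le> g z0"
    by (rule INF_lower) simp
  ultimately obtain m where m: "(INF y. g y) = ereal m"
    by (cases "INF y. g y") auto
  then have m_le: "ereal m \<le> g y" for y
    using INF_lower[of y UNIV g] by simp
  have "\<exists>y. g y \<le> ereal (m + inverse (real (Suc n)))" for n
  proof -
    have "(INF y. g y) < ereal (m + inverse (real (Suc n)))"
      unfolding m by simp
    then obtain y where "g y < ereal (m + inverse (real (Suc n)))"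
      by (auto simp: INF_less_iff)
    then show ?thesis
      by (blast intro: less_imp_le)
  qed
  then obtain ys where ys: "\<And>n. g (ys n) \<le> ereal (m + inverse (real (Suc n)))"
    by metis
  then have "Cauchy ys"
    by (rule strongly_convex_minimizing_sequence_Cauchy[OF assms(1,2) m_le])
  then obtain p where p: "ys \<longlonglongrightarrow> p"
    using Cauchy_convergent_iff convergent_def by blast
  have "(\<lambda>n. m + inverse (real (Suc n))) \<longlonglongrightarrow> m + 0"
    by (intro tendsto_intros LIMSEQ_inverse_real_of_nat)
  with ys have "g p \<le> ereal (m + 0)"
    by (rule lsc_sequentially[OF assms(4) p])
  then show ?thesis
    using m_le by (metis add_0_right order.trans)
qed

lemma strongly_convex_unique_minimizer:
  fixes g :: "'a::{real_inner, complete_space} \<Rightarrow> ereal"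
  assumes "hypoconvex (- \<sigma>) g" "0 < \<sigma>" "proper_fun g" "lsc g" "0 \<le> \<alpha>"
    and "\<And>y. ereal (- \<alpha> * (norm y)\<^sup>2 - \<beta> * norm y + \<nu>) \<le> g y"
  shows "\<exists>p. {q. \<forall>z. g q \<le> g z} = {p} \<and> strong_subgradient \<sigma> g p 0"
proof -
  obtain M where "\<And>y. ereal M \<le> g y"
    using strongly_convex_bdd_below[OF assms(1-3,5,6)] by blast
  then obtain p where p: "\<And>z. g p \<le> g z"
    using strongly_convex_has_minimizer[OF assms(1-4)] by blast
  then have growth: "strong_subgradient \<sigma> g p 0"
    by (rule strongly_convex_minimizer_growth[OF assms(1,3)])
  then have "{q. \<forall>z. g q \<le> g z} = {p}"
    using strong_subgradient_minimizer_unique[OF _ assms(2,3)] p by blast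
  with growth show ?thesis
    by blast
qed

section \<open>Strong convexity from a cocoercive subgradient selection\<close>

lemma cocoercive_imp_lipschitz:
  assumes "cocoercive \<gamma> S" "0 < \<gamma>"
  shows "(1 / \<gamma>)-lipschitz_on UNIV S"
proof (rule lipschitz_onI)
  fix x y
  have "\<gamma> * (norm (S x - S y))\<^sup>2 \<le> inner (x - y) (S x - S y)"
    using assms(1) unfolding cocoercive_def by blast
  also have "\<dots> \<le> norm (x - y) * norm (S x - S y)"
    by (rule norm_cauchy_schwarz)
  finally have "\<gamma> * norm (S x - S y) \<le> norm (x - y)"
    by (cases "S x = S y") (simp_all add: power2_eq_square)
  then show "dist (S x) (S y) \<le> 1 / \<gamma> * dist x y"
    using assms(2) by (simp add: dist_norm field_simps)
qed (use assms(2) in simp)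

lemma cocoercive_imp_monotone:
  assumes "cocoercive \<gamma> S" "0 \<le> \<gamma>"
  shows "0 \<le> inner (x - y) (S x - S y)"
  using assms unfolding cocoercive_def by (meson order_trans zero_le_mult_iff zero_le_power2)

lemma descent_lemma:
  fixes \<phi> :: "'a::real_inner \<Rightarrow> real"
  assumes subgradient: "\<And>x y. \<phi> x + inner (y - x) (S x) \<le> \<phi> y"
    and lipschitz: "L-lipschitz_on UNIV S"
  shows "\<phi> y \<le> \<phi> x + inner (y - x) (S x) + L / 2 * (norm (y - x))\<^sup>2"
proof -
  define D where "D x w = \<phi> (x + w) - \<phi> x - inner w (S x)" for x w
  have inner_bound: "inner w (S (x + w) - S x) \<le> L * (norm w)\<^sup>2" for x w
  proof -
    have "inner w (S (x + w) - S x) \<le> norm w * norm (S (x + w) - S x)"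
      by (rule norm_cauchy_schwarz)
    also have "\<dots> \<le> norm w * (L * norm w)"
      using lipschitz_on_normD[OF lipschitz, of "x + w" x] by (simp add: mult_left_mono)
    finally show ?thesis
      by (simp add: power2_eq_square mult.assoc mult.left_commute)
  qed
  have telescope: "D x w = D x h + D (x + h) h + inner h (S (x + h) - S x)" if "w = 2 *\<^sub>R h" for x w h
    using that by (simp add: D_def algebra_simps scaleR_2)
  \<comment> \<open>Halving w splits D into two copies at half size plus a Lipschitz term; this replaces
    integration of S along the segment, so \<phi> need not be differentiable.\<close>
  have halving: "D x w \<le> (L / 2 + L / 2 * (1 / 2) ^ k) * (norm w)\<^sup>2" for k x w
  proof (induction k arbitrary: x w)
    case 0
    have "D x w \<le> inner w (S (x + w) - S x)"
      using subgradient[of "x + w" x] by (simp add: D_def inner_diff_right)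
    then show ?case
      using inner_bound[of w x] by simp
  next
    case (Suc k)
    define h where "h = (1 / 2) *\<^sub>R w"
    have "D x w \<le> 2 * ((L / 2 + L / 2 * (1 / 2) ^ k) * (norm h)\<^sup>2) + L * (norm h)\<^sup>2"
      using telescope[of w h x] Suc.IH[of x h] Suc.IH[of "x + h" h] inner_bound[of h x]
      unfolding h_def by simp
    also have "\<dots> = (L / 2 + L / 2 * (1 / 2) ^ Suc k) * (norm w)\<^sup>2"
      unfolding h_def by (simp add: power2_eq_square field_simps)
    finally show ?case .
  qed
  have "(\<lambda>k. (L / 2 + L / 2 * (1 / 2) ^ k) * (norm (y - x))\<^sup>2) \<longlonglongrightarrow> (L / 2 + L / 2 * 0) * (norm (y - x))\<^sup>2"
    by (intro tendsto_intros LIMSEQ_power_zero) simp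
  then have "D x (y - x) \<le> (L / 2 + L / 2 * 0) * (norm (y - x))\<^sup>2"
    using halving by (intro LIMSEQ_le_const) auto
  then show ?thesis
    by (simp add: D_def)
qed

lemma strong_subgradients_of_cocoercive_selection:
  assumes "proper_fun h" "\<And>x. strong_subgradient 0 h (S x) x" "cocoercive \<gamma> S" "0 < \<gamma>"
  shows "strong_subgradient \<gamma> h (S x) x"
proof -
  define hs where "hs x = real_of_ereal (h (S x))" for x
  have hs: "h (S x) = ereal (hs x)" for x
    using strong_subgradient_finite[OF assms(1) assms(2)[of x]] by (metis hs_def real_of_ereal.simps(1))
  \<comment> \<open>\<phi> is the Fenchel conjugate of h, attained at S x.\<close>
  define \<phi> where "\<phi> x = inner x (S x) - hs x" for x
  have fenchel_young: "inner y z - \<phi> y \<le> hz" if "h z = ereal hz" for y z hz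
    using strong_subgradientD_finite[OF assms(2) hs that, of y]
    by (simp add: \<phi>_def inner_diff_right)
  have "\<phi> y + inner (x - y) (S y) \<le> \<phi> x" for x y
    using fenchel_young[OF hs, of x y] by (simp add: \<phi>_def inner_diff_left)
  note descent = descent_lemma[OF this cocoercive_imp_lipschitz[OF assms(3,4)]]
  show ?thesis
    unfolding strong_subgradient_def
  proof
    fix z
    show "h (S x) + ereal (inner x (z - S x) + \<gamma> / 2 * (norm (z - S x))\<^sup>2) \<le> h z"
    proof (cases "h z")
      case (real hz)
      define w where "w = z - S x"
      define y where "y = x + \<gamma> *\<^sub>R w"
      have "inner y z - inner (y - x) (S x) = inner x z + \<gamma> * (norm w)\<^sup>2"
        by (simp add: y_def w_def power2_norm_eq_inner algebra_simps)
      moreover have "1 / \<gamma> / 2 * (norm (y - x))\<^sup>2 = \<gamma> / 2 * (norm w)\<^sup>2"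
        using assms(4) by (simp add: y_def power_mult_distrib power2_eq_square)
      moreover have "inner x w = inner x z - inner x (S x)"
        by (simp add: w_def inner_diff_right)
      ultimately have "inner y z - \<phi> x - inner (y - x) (S x) - 1 / \<gamma> / 2 * (norm (y - x))\<^sup>2
          = hs x + inner x w + \<gamma> / 2 * (norm w)\<^sup>2"
        by (simp add: \<phi>_def)
      moreover have "inner y z - \<phi> x - inner (y - x) (S x) - 1 / \<gamma> / 2 * (norm (y - x))\<^sup>2 \<le> hz"
        using fenchel_young[OF real, of y] descent[of y x] by simp
      ultimately show ?thesis
        using hs real by (simp add: w_def)
    qed (use assms(1) in \<open>auto simp: proper_fun_def\<close>)
  qed
qed

lemma monotone_lipschitz_resolvent_solvable:
  fixes S :: "'a::{real_inner, complete_space} \<Rightarrow> 'a"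
  assumes monotone: "\<And>x y. 0 \<le> inner (x - y) (S x - S y)"
    and lipschitz: "L-lipschitz_on UNIV S" and "0 \<le> k"
  shows "\<exists>x. x + k *\<^sub>R S x = w"
proof -
  define M where "M = 1 + k * L"
  have M: "1 \<le> M"
    using assms(3) lipschitz_on_nonneg[OF lipschitz] by (simp add: M_def)
  define G where "G x = x - (1 / M\<^sup>2) *\<^sub>R (x + k *\<^sub>R S x - w)" for x
  define c where "c = sqrt (1 - 1 / M\<^sup>2)"
  have c: "0 \<le> c" "c < 1"
    using M by (auto simp: c_def power_le_one)
  have "dist (G x) (G y) \<le> c * dist x y" for x y
  proof -
    define d where "d = x - y"
    define e where "e = d + k *\<^sub>R (S x - S y)"
    have monotone_de: "(norm d)\<^sup>2 \<le> inner d e"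
      using monotone[of x y] assms(3) by (simp add: e_def d_def inner_add_right power2_norm_eq_inner)
    moreover have "norm e \<le> M * norm d"
    proof -
      have "norm e \<le> norm d + k * norm (S x - S y)"
        using norm_triangle_ineq[of d "k *\<^sub>R (S x - S y)"] assms(3) by (simp add: e_def)
      also have "\<dots> \<le> norm d + k * (L * norm d)"
        using lipschitz_on_normD[OF lipschitz, of x y] assms(3) by (simp add: d_def mult_left_mono)
      finally show ?thesis
        by (simp add: M_def algebra_simps)
    qed
    then have "(norm e)\<^sup>2 \<le> (M * norm d)\<^sup>2"
      by (simp add: power_mono)
    then have "(1 / M\<^sup>2)\<^sup>2 * (norm e)\<^sup>2 \<le> (1 / M\<^sup>2)\<^sup>2 * (M * norm d)\<^sup>2"
      by (rule mult_left_mono) simp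
    moreover have "2 / M\<^sup>2 * (norm d)\<^sup>2 \<le> 2 / M\<^sup>2 * inner d e"
      using monotone_de by (rule mult_left_mono) simp
    moreover have "(norm (d - (1 / M\<^sup>2) *\<^sub>R e))\<^sup>2
        = (norm d)\<^sup>2 - 2 / M\<^sup>2 * inner d e + (1 / M\<^sup>2)\<^sup>2 * (norm e)\<^sup>2"
      unfolding norm_diff_squared by (simp add: power_mult_distrib power_divide)
    moreover have "(1 / M\<^sup>2)\<^sup>2 * (M * norm d)\<^sup>2 = 1 / M\<^sup>2 * (norm d)\<^sup>2"
      using M by (simp add: power2_eq_square field_simps)
    ultimately have "(norm (d - (1 / M\<^sup>2) *\<^sub>R e))\<^sup>2 \<le> (1 - 1 / M\<^sup>2) * (norm d)\<^sup>2"
      by (simp add: algebra_simps)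
    then have "sqrt ((norm (d - (1 / M\<^sup>2) *\<^sub>R e))\<^sup>2) \<le> sqrt ((1 - 1 / M\<^sup>2) * (norm d)\<^sup>2)"
      by (rule real_sqrt_le_mono)
    then have "norm (d - (1 / M\<^sup>2) *\<^sub>R e) \<le> c * norm d"
      by (simp add: c_def real_sqrt_mult)
    moreover have "G x - G y = d - (1 / M\<^sup>2) *\<^sub>R e"
      by (simp add: G_def d_def e_def algebra_simps)
    ultimately show ?thesis
      by (simp add: dist_norm d_def)
  qed
  then obtain x where "G x = x"
    using banach_fix_type[OF c] by blast
  then show ?thesis
    using M by (auto simp: G_def)
qed

lemma quadratic_growth_tendsto_zero:
  fixes r :: "nat \<Rightarrow> real"
  assumes "\<And>n. 0 \<le> r n" "\<And>n. real (Suc n) * (r n)\<^sup>2 \<le> K0 + K1 * r n"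
  shows "r \<longlonglongrightarrow> 0"
proof -
  define C where "C = 2 * \<bar>K0\<bar> + 2 * K1\<^sup>2"
  have bound: "r n \<le> sqrt (C * inverse (real (Suc n)))" for n
  proof -
    define N where "N = real (Suc n)"
    have N: "1 \<le> N"
      by (simp add: N_def)
    have "0 \<le> (N * r n - K1)\<^sup>2 / N"
      using N by simp
    then have "2 * (K1 * r n) \<le> N * (r n)\<^sup>2 + K1\<^sup>2 / N"
      using N by (simp add: power2_eq_square field_simps)
    moreover have "K1\<^sup>2 * 1 \<le> K1\<^sup>2 * N"
      using N by (intro mult_left_mono) auto
    then have "K1\<^sup>2 / N \<le> K1\<^sup>2"
      using N by (simp add: field_simps)
    moreover have "N * (r n)\<^sup>2 \<le> K0 + K1 * r n"
      using assms(2)[of n] by (simp add: N_def)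
    ultimately have "N * (r n)\<^sup>2 \<le> C"
      unfolding C_def using abs_ge_self[of K0] zero_le_power2[of K1] by linarith
    then have "(r n)\<^sup>2 \<le> C * inverse N"
      using N by (simp add: field_simps)
    then show ?thesis
      using assms(1)[of n] by (simp add: N_def real_le_rsqrt)
  qed
  have "(\<lambda>n. sqrt (C * inverse (real (Suc n)))) \<longlonglongrightarrow> sqrt (C * 0)"
    by (intro tendsto_intros LIMSEQ_inverse_real_of_nat)
  then have "(\<lambda>n. sqrt (C * inverse (real (Suc n)))) \<longlonglongrightarrow> 0"
    by simp
  moreover have "\<forall>\<^sub>F n in sequentially. 0 \<le> r n" "\<forall>\<^sub>F n in sequentially. r n \<le> sqrt (C * inverse (real (Suc n)))"
    using assms(1) bound by simp_all
  ultimately show ?thesis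
    using tendsto_sandwich[of "\<lambda>n. 0" r] by simp
qed

lemma strong_subgradient_convex_comb:
  assumes "strong_subgradient \<gamma> h v x" "h v = ereal hv" "h a = ereal ga" "h b = ereal gb"
    and "0 \<le> t" "t \<le> 1" "u = (1 - t) *\<^sub>R a + t *\<^sub>R b"
  shows "hv + inner x (u - v) + \<gamma> / 2 * (norm (u - v))\<^sup>2
    \<le> (1 - t) * ga + t * gb - \<gamma> / 2 * t * (1 - t) * (norm (a - b))\<^sup>2"
proof -
  have "(1 - t) * (hv + inner x (a - v) + \<gamma> / 2 * (norm (a - v))\<^sup>2) \<le> (1 - t) * ga"
    using strong_subgradientD_finite[OF assms(1,2,3)] assms(6) by (simp add: mult_left_mono)
  moreover have "t * (hv + inner x (b - v) + \<gamma> / 2 * (norm (b - v))\<^sup>2) \<le> t * gb"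
    using strong_subgradientD_finite[OF assms(1,2,4)] assms(5) by (simp add: mult_left_mono)
  moreover have "hv + inner x (u - v) + \<gamma> / 2 * (norm (u - v))\<^sup>2
      = (1 - t) * (hv + inner x (a - v) + \<gamma> / 2 * (norm (a - v))\<^sup>2)
        + t * (hv + inner x (b - v) + \<gamma> / 2 * (norm (b - v))\<^sup>2) - \<gamma> / 2 * t * (1 - t) * (norm (a - b))\<^sup>2"
  proof -
    have "u - v = (1 - t) *\<^sub>R (a - v) + t *\<^sub>R (b - v)"
      using assms(7) by (simp add: algebra_simps)
    then have inner_uv: "inner x (u - v) = (1 - t) * inner x (a - v) + t * inner x (b - v)"
      by (simp add: inner_add_right)
    have norm_uv: "(norm (u - v))\<^sup>2
        = (1 - t) * (norm (a - v))\<^sup>2 + t * (norm (b - v))\<^sup>2 - t * (1 - t) * (norm (a - b))\<^sup>2"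
      using dist_convex_comb_squared[of v t a b] assms(7) by (simp add: norm_minus_commute)
    show ?thesis
      unfolding inner_uv norm_uv by (simp add: algebra_simps diff_divide_distrib)
  qed
  ultimately show ?thesis
    by linarith
qed

lemma strong_subgradient_resolvent_bound:
  assumes "strong_subgradient \<gamma> h v x" "0 \<le> \<gamma>" "h v = ereal hv" "h a = ereal ga" "h b = ereal gb"
    and "0 \<le> t" "t \<le> 1" "u = (1 - t) *\<^sub>R a + t *\<^sub>R b" "x + k *\<^sub>R v = (1 + k) *\<^sub>R u"
  shows "hv \<le> (1 - t) * ga + t * gb - \<gamma> / 2 * t * (1 - t) * (norm (a - b))\<^sup>2
    + norm u * norm (u - v) - k * (norm (u - v))\<^sup>2"
proof -
  have "x - v = (1 + k) *\<^sub>R (u - v)"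
    using assms(9) by (simp add: algebra_simps)
  then have "inner (x - v) (u - v) = (1 + k) * (norm (u - v))\<^sup>2"
    by (simp add: power2_norm_eq_inner)
  moreover have "inner x (u - v) = inner u (u - v) - inner (u - v) (u - v) + inner (x - v) (u - v)"
    by (simp add: inner_diff_left)
  ultimately have "inner x (u - v) = inner u (u - v) + k * (norm (u - v))\<^sup>2"
    by (simp add: power2_norm_eq_inner algebra_simps)
  moreover have "- (norm u * norm (u - v)) \<le> inner u (u - v)"
    using Cauchy_Schwarz_ineq2[of u "u - v"] by simp
  moreover have "0 \<le> \<gamma> / 2 * (norm (u - v))\<^sup>2"
    using assms(2) by simp
  ultimately show ?thesis
    using strong_subgradient_convex_comb[OF assms(1,3-8)] by linarith
qed

lemma strongly_convex_of_strong_subgradients: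
  fixes h :: "'a::{real_inner, complete_space} \<Rightarrow> ereal"
  assumes "proper_fun h" "lsc h" "\<And>x. strong_subgradient \<gamma> h (S x) x" "0 < \<gamma>"
  shows "hypoconvex (- \<gamma>) h"
proof (rule hypoconvexI_finite)
  show "h y \<noteq> -\<infinity>" for y
    using assms(1) unfolding proper_fun_def by blast
next
  fix a b ga gb and t :: real
  assume ab: "h a = ereal ga" "h b = ereal gb" and t: "0 < t" "t < 1"
  define u where "u = (1 - t) *\<^sub>R a + t *\<^sub>R b"
  define R where "R = (1 - t) * ga + t * gb - \<gamma> / 2 * t * (1 - t) * (norm (a - b))\<^sup>2"
  define hs where "hs x = real_of_ereal (h (S x))" for x
  have hs: "h (S x) = ereal (hs x)" for x
    using strong_subgradient_finite[OF assms(1,3)] by (metis hs_def real_of_ereal.simps(1))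
  have cocoercive: "cocoercive \<gamma> S"
    using cocoercive_if_strong_subgradients[OF assms(1,3)] .
  \<comment> \<open>Points of the range of S converging to u: v = S x with x + (n + 1) v = (n + 2) u.\<close>
  have "\<exists>x. x + real (Suc n) *\<^sub>R S x = (1 + real (Suc n)) *\<^sub>R u" for n
    using monotone_lipschitz_resolvent_solvable[OF cocoercive_imp_monotone[OF cocoercive]
        cocoercive_imp_lipschitz[OF cocoercive assms(4)]] assms(4) by simp
  then obtain xs where xs: "\<And>n. xs n + real (Suc n) *\<^sub>R S (xs n) = (1 + real (Suc n)) *\<^sub>R u"
    by metis
  define r where "r n = norm (u - S (xs n))" for n
  have upper: "hs (xs n) \<le> R + norm u * r n - real (Suc n) * (r n)\<^sup>2" for n
    using strong_subgradient_resolvent_bound[OF assms(3) _ hs ab _ _ u_def xs] assms(4) t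
    unfolding R_def r_def by simp
  have "hs 0 + \<gamma> / 2 * (norm (S (xs n) - S 0))\<^sup>2 \<le> hs (xs n)" for n
    using strong_subgradientD_finite[OF assms(3) hs hs, of 0 "xs n"] by simp
  then have lower: "hs 0 \<le> hs (xs n)" for n
    using assms(4) by (smt (verit) zero_le_divide_iff zero_le_mult_iff zero_le_power2)
  have "r \<longlonglongrightarrow> 0"
  proof (rule quadratic_growth_tendsto_zero)
    show "real (Suc n) * (r n)\<^sup>2 \<le> (R - hs 0) + norm u * r n" for n
      using upper[of n] lower[of n] by simp
  qed (simp add: r_def)
  then have "(\<lambda>n. norm (S (xs n) - u)) \<longlonglongrightarrow> 0"
    unfolding r_def by (simp add: norm_minus_commute)
  then have "(\<lambda>n. S (xs n)) \<longlonglongrightarrow> u"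
    by (simp add: tendsto_norm_zero_iff LIM_zero_iff)
  moreover have "h (S (xs n)) \<le> ereal (R + norm u * r n)" for n
    using upper[of n] hs[of "xs n"] by (simp add: order_trans)
  moreover have "(\<lambda>n. R + norm u * r n) \<longlonglongrightarrow> R + norm u * 0"
    by (intro tendsto_intros \<open>r \<longlonglongrightarrow> 0\<close>)
  ultimately have "h u \<le> ereal (R + norm u * 0)"
    by (rule lsc_sequentially[OF assms(2)])
  then show "h ((1 - t) *\<^sub>R a + t *\<^sub>R b)
    \<le> ereal ((1 - t) * ga + t * gb + - \<gamma> / 2 * t * (1 - t) * (norm (a - b))\<^sup>2)"
    by (simp add: u_def R_def)
qed

section \<open>The proximity operator\<close>

lemma conically_nonexpansive_diff_iff_cocoercive:
  fixes T :: "'a::real_inner \<Rightarrow> 'a"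
  assumes "0 < a"
  shows "conically_nonexpansive a (\<lambda>x. x - T x) \<longleftrightarrow> cocoercive (1 / (2 * a)) T"
proof -
  have key: "norm (d - (1 / a) *\<^sub>R e) \<le> norm d \<longleftrightarrow> 1 / (2 * a) * (norm e)\<^sup>2 \<le> inner d e"
    for d e :: 'a
  proof -
    have "norm (d - (1 / a) *\<^sub>R e) \<le> norm d \<longleftrightarrow> (norm (d - (1 / a) *\<^sub>R e))\<^sup>2 \<le> (norm d)\<^sup>2"
      by (simp add: power2_le_iff_abs_le)
    also have "\<dots> \<longleftrightarrow> (norm e)\<^sup>2 / a\<^sup>2 \<le> 2 / a * inner d e"
      unfolding norm_diff_squared by (simp add: power_mult_distrib power_divide)
    also have "\<dots> \<longleftrightarrow> 1 / (2 * a) * (norm e)\<^sup>2 \<le> inner d e"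
      using assms by (simp add: field_simps power2_eq_square)
    finally show ?thesis .
  qed
  have "(x - (1 / a) *\<^sub>R T x) - (y - (1 / a) *\<^sub>R T y) = (x - y) - (1 / a) *\<^sub>R (T x - T y)" for x y
    by (simp add: algebra_simps)
  then have nonexpansive_iff: "nonexpansive (\<lambda>x. x - (1 / a) *\<^sub>R T x) \<longleftrightarrow> cocoercive (1 / (2 * a)) T"
    unfolding nonexpansive_def cocoercive_def by (simp only: key)
  have "conically_nonexpansive a (\<lambda>x. x - T x) \<longleftrightarrow> nonexpansive (\<lambda>x. x - (1 / a) *\<^sub>R T x)"
  proof
    assume "conically_nonexpansive a (\<lambda>x. x - T x)"
    then obtain N where "nonexpansive N" "\<And>x. x - T x = (1 - a) *\<^sub>R x + a *\<^sub>R N x"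
      unfolding conically_nonexpansive_def by blast
    moreover have "N x = x - (1 / a) *\<^sub>R T x" if "x - T x = (1 - a) *\<^sub>R x + a *\<^sub>R N x" for x
    proof -
      have "a *\<^sub>R N x = a *\<^sub>R (x - (1 / a) *\<^sub>R T x)"
        using that assms by (simp add: algebra_simps)
      then show ?thesis
        using assms by simp
    qed
    ultimately show "nonexpansive (\<lambda>x. x - (1 / a) *\<^sub>R T x)"
      by (metis (no_types, lifting) ext)
  next
    assume "nonexpansive (\<lambda>x. x - (1 / a) *\<^sub>R T x)"
    moreover have "x - T x = (1 - a) *\<^sub>R x + a *\<^sub>R (x - (1 / a) *\<^sub>R T x)" for x
      using assms by (simp add: algebra_simps)
    ultimately show "conically_nonexpansive a (\<lambda>x. x - T x)"
      unfolding conically_nonexpansive_def by blast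
  qed
  then show ?thesis
    using nonexpansive_iff by simp
qed

lemma prox_cocoercive_if_hypoconvex:
  fixes f :: "'a::{real_inner, complete_space} \<Rightarrow> ereal"
  assumes "hypoconvex (1 / lam) f" "proper_fun f" "lsc f" "0 \<le> \<alpha>"
    and "\<And>x. ereal (- \<alpha> * (norm x)\<^sup>2 - \<beta> * norm x + \<nu>) \<le> f x" "0 < \<mu>" "\<mu> < lam"
  shows "\<exists>T. (\<forall>x. Prox \<mu> f x = {T x}) \<and> cocoercive ((lam - \<mu>) / lam) T"
proof -
  define \<sigma> where "\<sigma> = 1 / \<mu> - 1 / lam"
  have \<sigma>: "0 < \<sigma>"
    using assms(6,7) by (simp add: \<sigma>_def field_simps)
  define g where "g x z = f z + ereal ((norm (x - z))\<^sup>2 / (2 * \<mu>))" for x z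
  define h where "h z = f z + ereal ((norm z)\<^sup>2 / (2 * \<mu>))" for z
  have proper: "proper_fun (g x)" "proper_fun h" for x
    unfolding g_def h_def by (rule proper_fun_add_real[OF assms(2)])+
  have convex: "hypoconvex (- \<sigma>) (g x)" for x
    using hypoconvex_add_sq_dist[OF assms(1), where x = x and \<mu> = \<mu>] assms(2)
    unfolding g_def \<sigma>_def proper_fun_def by simp
  have "lsc (g x)" for x
    unfolding g_def using assms(6) by (intro lsc_add_continuous assms(3) continuous_intros) auto
  moreover have "ereal (- \<alpha> * (norm y)\<^sup>2 - \<beta> * norm y + \<nu>) \<le> g x y" for x y
    using assms(5)[of y] assms(6) unfolding g_def by (simp add: order_trans add_increasing2)
  ultimately have "\<exists>p. {q. \<forall>z. g x q \<le> g x z} = {p} \<and> strong_subgradient \<sigma> (g x) p 0" for x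
    using strongly_convex_unique_minimizer[OF convex \<sigma> proper(1) _ assms(4)] by blast
  then obtain T where "\<And>x. {q. \<forall>z. g x q \<le> g x z} = {T x}" "\<And>x. strong_subgradient \<sigma> (g x) (T x) 0"
    by metis
  then have "Prox \<mu> f x = {T x}" and growth: "strong_subgradient \<sigma> (g x) (T x) 0" for x
    unfolding Prox_def g_def by simp_all
  moreover have "cocoercive \<sigma> (\<lambda>y. T (\<mu> *\<^sub>R y))"
  proof (rule cocoercive_if_strong_subgradients[OF proper(2)])
    show "strong_subgradient \<sigma> h (T (\<mu> *\<^sub>R y)) y" for y
      using growth[of "\<mu> *\<^sub>R y"] assms(6) strong_subgradient_prox_objective_iff[OF assms(6),
          where \<sigma> = \<sigma> and f = f and x = "\<mu> *\<^sub>R y" and p = "T (\<mu> *\<^sub>R y)"]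
      unfolding g_def h_def by simp
  qed
  then have "cocoercive (\<sigma> / (1 / \<mu>)) (\<lambda>x. T (\<mu> *\<^sub>R ((1 / \<mu>) *\<^sub>R x)))"
    using assms(6) by (intro cocoercive_rescale[where T = "\<lambda>y. T (\<mu> *\<^sub>R y)"]) auto
  then have "cocoercive (\<sigma> / (1 / \<mu>)) T"
    using assms(6) by simp
  moreover have "\<sigma> / (1 / \<mu>) = (lam - \<mu>) / lam"
    using assms(6,7) by (simp add: \<sigma>_def field_simps)
  ultimately show ?thesis
    by auto
qed

lemma hypoconvex_if_prox_cocoercive:
  fixes f :: "'a::{real_inner, complete_space} \<Rightarrow> ereal"
  assumes "proper_fun f" "lsc f" "\<And>x. Prox \<mu> f x = {T x}" "cocoercive ((lam - \<mu>) / lam) T"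
    and "0 < \<mu>" "\<mu> < lam"
  shows "hypoconvex (1 / lam) f"
proof -
  define \<gamma> where "\<gamma> = (lam - \<mu>) / lam / \<mu>"
  have \<gamma>: "0 < \<gamma>"
    using assms(5,6) by (simp add: \<gamma>_def)
  define h where "h z = f z + ereal ((norm z)\<^sup>2 / (2 * \<mu>))" for z
  have proper: "proper_fun h"
    unfolding h_def by (rule proper_fun_add_real[OF assms(1)])
  have subgradient: "strong_subgradient 0 h (T (\<mu> *\<^sub>R y)) y" for y
    using Prox_iff_subgradient[OF assms(5), of "T (\<mu> *\<^sub>R y)" f "\<mu> *\<^sub>R y"] assms(3,5)
    unfolding h_def by simp
  have "cocoercive \<gamma> (\<lambda>y. T (\<mu> *\<^sub>R y))"
    unfolding \<gamma>_def by (rule cocoercive_rescale[OF assms(4,5)])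
  then have strong: "strong_subgradient \<gamma> h (T (\<mu> *\<^sub>R y)) y" for y
    using strong_subgradients_of_cocoercive_selection[OF proper subgradient _ \<gamma>] by blast
  have "lsc h"
    unfolding h_def using assms(5) by (intro lsc_add_continuous assms(2) continuous_intros) auto
  then have "hypoconvex (- \<gamma>) h"
    by (rule strongly_convex_of_strong_subgradients[OF proper _ strong \<gamma>])
  \<comment> \<open>Removing the quadratic again is adding it with -\<mu> in place of \<mu>.\<close>
  then have "hypoconvex (- \<gamma> - 1 / (- \<mu>)) (\<lambda>z. h z + ereal ((norm (0 - z))\<^sup>2 / (2 * (- \<mu>))))"
    using proper unfolding proper_fun_def by (intro hypoconvex_add_sq_dist) auto
  moreover have "(\<lambda>z. h z + ereal ((norm (0 - z))\<^sup>2 / (2 * (- \<mu>)))) = f"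
  proof
    fix z
    show "h z + ereal ((norm (0 - z))\<^sup>2 / (2 * (- \<mu>))) = f z"
      unfolding h_def by (cases "f z") auto
  qed
  moreover have "- \<gamma> - 1 / (- \<mu>) = 1 / lam"
    using assms(5,6) by (simp add: \<gamma>_def field_simps)
  ultimately show ?thesis
    by simp
qed

theorem theorem6p4:
  fixes f :: "'a::{real_inner, complete_space} \<Rightarrow> ereal"
    and lam \<mu> \<alpha> \<beta> \<nu> :: real
  assumes "proper_fun f" and "lsc f"
    and "\<alpha> \<ge> 0"
    and "\<forall>x. f x \<ge> ereal (- \<alpha> * (norm x)\<^sup>2 - \<beta> * norm x + \<nu>)"
    and "lam > 0" and "0 < \<mu>" and "\<mu> < lam"
  shows "(hypoconvex (1 / lam) f
            \<longleftrightarrow> (\<exists>T. (\<forall>x. Prox \<mu> f x = {T x})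
                     \<and> conically_nonexpansive (lam / (2 * (lam - \<mu>))) (\<lambda>x. x - T x)))
       \<and> (hypoconvex (1 / lam) f
            \<longleftrightarrow> (\<exists>T. (\<forall>x. Prox \<mu> f x = {T x}) \<and> cocoercive ((lam - \<mu>) / lam) T))"
proof -
  have cocoercive_iff: "hypoconvex (1 / lam) f
      \<longleftrightarrow> (\<exists>T. (\<forall>x. Prox \<mu> f x = {T x}) \<and> cocoercive ((lam - \<mu>) / lam) T)"
    using prox_cocoercive_if_hypoconvex[OF _ assms(1-3)] assms(4,6,7)
      hypoconvex_if_prox_cocoercive[OF assms(1,2) _ _ assms(6,7)] by blast
  have "0 < lam / (2 * (lam - \<mu>))" "1 / (2 * (lam / (2 * (lam - \<mu>)))) = (lam - \<mu>) / lam"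
    using assms(5-7) by (auto simp: field_simps)
  then have "conically_nonexpansive (lam / (2 * (lam - \<mu>))) (\<lambda>x. x - T x)
      \<longleftrightarrow> cocoercive ((lam - \<mu>) / lam) T" for T :: "'a \<Rightarrow> 'a"
    using conically_nonexpansive_diff_iff_cocoercive by metis
  then show ?thesis
    using cocoercive_iff by simp
qed

end
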